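(* Let $a,A,b,B:\mathbb Z_{\ge0}\to R$ be any four functions with values in a commutative ring $R$, and work in the formal power series ring $R[[X]]$. Define $$F(a,A;b,B)=\sum_{K,L,M\ge0}a(K)A(K+M)b(L)B(L+M)X^{K+L+M},\qquad C(a,b)=\sum_{r\ge0}a(r)b(r)X^r.$$ Then $$F(a,A;b,B)+F(A,a;B,b)=C(A\star b,\,a\star B)+C(a,A)\,C(b,B),$$ where $\star$ denotes additive convolution, $(f\star g)(n)=\sum_{i+j=n}f(i)g(j)$.
   Context: All sums are over nonnegative integers; the identity is an equality of formal power series in $X$. *)

theory Defs
  imports "HOL-Computational_Algebra.Formal_Power_Series"
begin

definition conv :: "(nat \<Rightarrow> 'a::comm_ring) \<Rightarrow> (nat \<Rightarrow> 'a) \<Rightarrow> nat \<Rightarrow> 'a" where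
  "conv f g n = (\<Sum>(i, j) \<in> {(i, j). i + j = n}. f i * g j)"

definition Fser :: "(nat \<Rightarrow> 'a::comm_ring) \<Rightarrow> (nat \<Rightarrow> 'a) \<Rightarrow> (nat \<Rightarrow> 'a) \<Rightarrow> (nat \<Rightarrow> 'a) \<Rightarrow> 'a fps" where
  "Fser a A b B = Abs_fps (\<lambda>n. \<Sum>(K, L, M) \<in> {(K, L, M). K + L + M = n}.
       a K * A (K + M) * b L * B (L + M))"

definition Cser :: "(nat \<Rightarrow> 'a::comm_ring) \<Rightarrow> (nat \<Rightarrow> 'a) \<Rightarrow> 'a fps" where
  "Cser a b = Abs_fps (\<lambda>r. a r * b r)"

end

theory Submission
  imports Defs
begin

text \<open>
  Expand the coefficient of \<open>X^n\<close> in \<open>C(A \<star> b, a \<star> B)\<close> as a sum of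
  \<open>A i b j a p B q\<close> over \<open>i + j = p + q = n\<close>. The terms with \<open>p \<le> i\<close> are exactly the
  coefficient of \<open>F(a,A;b,B)\<close>, via \<open>(K, L, M) = (p, j, i - p)\<close>; the terms with \<open>i < p\<close>
  are the terms of \<open>F(A,a;B,b)\<close> with \<open>M > 0\<close>, via \<open>(K, L, M) = (i, q, p - i)\<close>.
  The remaining terms of \<open>F(A,a;B,b)\<close>, those with \<open>M = 0\<close>, form the coefficient of
  \<open>C(a,A) C(b,B)\<close>.
\<close>

lemma finite_triples_sum_eq: "finite {(K, L, M). K + L + M = (n::nat)}"
proof (rule finite_subset)
  show "{(K, L, M). K + L + M = n} \<subseteq> {..n} \<times> {..n} \<times> {..n}" by auto
qed auto

lemma finite_pairs_sum_eq: "finite {(i, j). i + j = (n::nat)}"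
proof (rule finite_subset)
  show "{(i, j). i + j = n} \<subseteq> {..n} \<times> {..n}" by auto
qed auto

lemma fps_nth_Fser:
  "fps_nth (Fser a A b B) n =
     (\<Sum>(K, L, M) \<in> {(K, L, M). K + L + M = n}. a K * A (K + M) * b L * B (L + M))"
  by (simp add: Fser_def)

lemma conv_mult_conv:
  fixes a A b B :: "nat \<Rightarrow> 'r::comm_ring"
  shows "conv A b n * conv a B n =
           (\<Sum>(K, L, M) \<in> {(K, L, M). K + L + M = n}. a K * A (K + M) * b L * B (L + M))
         + (\<Sum>(K, L, M) \<in> {(K, L, M). K + L + M = n \<and> 0 < M}. A K * a (K + M) * B L * b (L + M))"
proof -
  define T where "T = {(i, j). i + j = n}"
  define U1 where "U1 = {((i, j), (p, q)) \<in> T \<times> T. p \<le> i}"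
  define U2 where "U2 = {((i, j), (p, q)) \<in> T \<times> T. i < p}"
  define g where "g = (\<lambda>((i, j), (p, q)). A i * b j * (a p * B q))"
  have complement_eq: "q = j + i - p" if "p + q = i + j" for i j p q :: nat
    using that by arith
  have fin: "finite (T \<times> T)"
    unfolding T_def using finite_pairs_sum_eq by blast
  have "conv A b n * conv a B n = sum g (T \<times> T)"
    unfolding conv_def T_def g_def
    by (simp add: sum_product sum.cartesian_product case_prod_beta)
  also have "T \<times> T = U1 \<union> U2"
    unfolding U1_def U2_def by auto
  also have "sum g (U1 \<union> U2) = sum g U1 + sum g U2"
    using fin by (intro sum.union_disjoint finite_subset[OF _ fin]) (auto simp: U1_def U2_def)
  also have "sum g U1 =
      (\<Sum>(K, L, M) \<in> {(K, L, M). K + L + M = n}. a K * A (K + M) * b L * B (L + M))"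
    unfolding g_def
    by (rule sum.reindex_bij_witness[where j = "\<lambda>((i, j), (p, q)). (p, j, i - p)"
          and i = "\<lambda>(K, L, M). ((K + M, L), (K, L + M))"])
       (auto simp: U1_def T_def mult_ac dest: complement_eq)
  also have "sum g U2 =
      (\<Sum>(K, L, M) \<in> {(K, L, M). K + L + M = n \<and> 0 < M}. A K * a (K + M) * B L * b (L + M))"
    unfolding g_def
    by (rule sum.reindex_bij_witness[where j = "\<lambda>((i, j), (p, q)). (i, q, p - i)"
          and i = "\<lambda>(K, L, M). ((K, L + M), (K + M, L))"])
       (auto simp: U2_def T_def algebra_simps)
  finally show ?thesis .
qed

lemma fps_nth_Fser_split_diagonal:
  fixes a A b B :: "nat \<Rightarrow> 'r::comm_ring"
  shows "fps_nth (Fser a A b B) n =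
           (\<Sum>(K, L, M) \<in> {(K, L, M). K + L + M = n \<and> 0 < M}. a K * A (K + M) * b L * B (L + M))
         + fps_nth (Cser a A * Cser b B) n"
proof -
  let ?f = "\<lambda>(K, L, M). a K * A (K + M) * b L * B (L + M)"
  have "{(K, L, M). K + L + M = n} =
      {(K, L, M). K + L + M = n \<and> 0 < M} \<union> {(K, L, M). K + L + M = n \<and> M = 0}"
    by auto
  moreover have "finite {(K, L, M). K + L + M = n \<and> M = (0::nat)}"
    by (rule finite_subset[OF _ finite_triples_sum_eq[of n]]) auto
  moreover have "finite {(K, L, M). K + L + M = n \<and> 0 < (M::nat)}"
    by (rule finite_subset[OF _ finite_triples_sum_eq[of n]]) auto
  ultimately have "fps_nth (Fser a A b B) n =
      sum ?f {(K, L, M). K + L + M = n \<and> 0 < M} + sum ?f {(K, L, M). K + L + M = n \<and> M = 0}"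
    unfolding fps_nth_Fser by (simp add: sum.union_disjoint disjoint_iff)
  also have "sum ?f {(K, L, M). K + L + M = n \<and> M = 0} = fps_nth (Cser a A * Cser b B) n"
    unfolding Cser_def fps_mult_nth fps_nth_Abs_fps
    by (rule sum.reindex_bij_witness[where j = "\<lambda>(K, L, M). K" and i = "\<lambda>K. (K, n - K, 0)"])
       (auto simp: algebra_simps)
  finally show ?thesis .
qed

theorem mainTheorem2:
  fixes a A b B :: "nat \<Rightarrow> 'r::comm_ring"
  shows "Fser a A b B + Fser A a B b = Cser (conv A b) (conv a B) + Cser a A * Cser b B"
proof (rule fps_ext)
  fix n
  have "Cser A a * Cser B b = Cser a A * Cser b B"
    unfolding Cser_def by (simp add: mult.commute)
  then show "fps_nth (Fser a A b B + Fser A a B b) n =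
      fps_nth (Cser (conv A b) (conv a B) + Cser a A * Cser b B) n"
    using fps_nth_Fser_split_diagonal[of A a B b n]
    by (simp add: Cser_def conv_mult_conv fps_nth_Fser[of a A b B n] algebra_simps)
qed

end
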